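(* Let $A\in\mathbb{R}^{m\times n}$, let $T$ be an ordered subset of $r$ elements of $\{1,\dots,n\}$, and let $\hat A:=A[:,T]$ be the $m\times r$ submatrix of $A$ formed by the columns $T$, with $\mathrm{rank}(\hat A)=r$. Let $E:=\mathrm{sign}(\hat A^+)\in\mathbb{R}^{r\times m}$. Then there exist a matrix $W\in\mathbb{R}^{m\times n}$ and a skew-symmetric matrix $U\in\mathbb{R}^{m\times m}$ such that $\hat A^\top W A^\top+\hat A^\top U=E$ and $\langle A,W\rangle=\|\hat A^+\|_1$.
   Context: $\hat A^+$ is the Moore–Penrose pseudoinverse of $\hat A$. $\mathrm{sign}$ is applied entrywise, with $\mathrm{sign}(x)=x/|x|$ for $x\ne 0$ and $\mathrm{sign}(0)=0$. $\langle X,Y\rangle=\mathrm{trace}(X^\top Y)=\sum_{ij}x_{ij}y_{ij}$, and $\|H\|_1=\sum_{i,j}|H_{ij}|$. *)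

theory Defs
  imports "HOL-Analysis.Analysis"
begin

definition pinv :: "real^'c^'r \<Rightarrow> real^'r^'c" where
  "pinv A = (THE X. A ** X ** A = A \<and> X ** A ** X = X \<and>
                    transpose (A ** X) = A ** X \<and> transpose (X ** A) = X ** A)"

text \<open>Columns of A selected (in order) by the injective index map T.\<close>
definition col_submatrix :: "real^'n^'m \<Rightarrow> ('r \<Rightarrow> 'n) \<Rightarrow> real^'r^'m" where
  "col_submatrix A T = (\<chi> i j. A $ i $ T j)"

text \<open>Entrywise sign; sgn on reals is x/|x| for x \<noteq> 0 and 0 at 0.\<close>
definition sign_mat :: "real^'c^'r \<Rightarrow> real^'c^'r" where
  "sign_mat A = (\<chi> i j. sgn (A $ i $ j))"

definition frob_inner :: "real^'c^'r \<Rightarrow> real^'c^'r \<Rightarrow> real" where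
  "frob_inner X Y = (\<Sum>i\<in>UNIV. \<Sum>j\<in>UNIV. X $ i $ j * Y $ i $ j)"

definition entry_norm1 :: "real^'c^'r \<Rightarrow> real" where
  "entry_norm1 H = (\<Sum>i\<in>UNIV. \<Sum>j\<in>UNIV. \<bar>H $ i $ j\<bar>)"

end

theory Submission
  imports Defs
begin

text \<open>Write \<open>X = \<hat>A\<^sup>+\<close>. Full column rank makes \<open>X\<close> a left inverse of \<open>\<hat>A\<close> with
  \<open>\<hat>A X\<close> symmetric, hence \<open>X X\<^sup>T \<hat>A\<^sup>T = X\<close>. Take \<open>\<hat>W = E\<^sup>T X X\<^sup>T\<close> and
  \<open>U = X\<^sup>T E - E\<^sup>T X\<close>: then \<open>\<hat>A\<^sup>T \<hat>W \<hat>A\<^sup>T = \<hat>A\<^sup>T E\<^sup>T X\<close>, which \<open>\<hat>A\<^sup>T U\<close> cancels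
  up to \<open>(X \<hat>A)\<^sup>T E = E\<close>, and \<open>\<langle>\<hat>A, \<hat>W\<rangle> = tr (\<hat>A\<^sup>T E\<^sup>T X X\<^sup>T) = \<langle>E, X\<rangle> = \<parallel>X\<parallel>\<^sub>1\<close>
  by cyclicity of the trace. Padding \<open>\<hat>W\<close> with zero columns outside \<open>T\<close> gives \<open>W\<close>.\<close>

definition penrose_conditions :: "real^'c^'r \<Rightarrow> real^'r^'c \<Rightarrow> bool" where
  "penrose_conditions A X \<longleftrightarrow> A ** X ** A = A \<and> X ** A ** X = X \<and>
     transpose (A ** X) = A ** X \<and> transpose (X ** A) = X ** A"

lemma penrose_conditions_unique:
  assumes X: "penrose_conditions A X" and Y: "penrose_conditions A Y"
  shows "X = Y"
proof -
  have AXA: "A ** X ** A = A" and XAX: "X ** A ** X = X"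
    and AX: "transpose (A ** X) = A ** X" and XA: "transpose (X ** A) = X ** A"
    using X by (auto simp: penrose_conditions_def)
  have AYA: "A ** Y ** A = A" and YAY: "Y ** A ** Y = Y"
    and AY: "transpose (A ** Y) = A ** Y" and YA: "transpose (Y ** A) = Y ** A"
    using Y by (auto simp: penrose_conditions_def)
  have "X = transpose (X ** A) ** X"
    using XAX XA by simp
  also have "\<dots> = transpose (A ** Y ** A) ** transpose X ** X"
    using AYA by (simp add: matrix_transpose_mul matrix_mul_assoc)
  also have "\<dots> = transpose (Y ** A) ** transpose (X ** A) ** X"
    by (simp add: matrix_transpose_mul matrix_mul_assoc)
  also have "\<dots> = Y ** A ** (X ** A ** X)"
    using YA XA by (simp add: matrix_mul_assoc)
  also have "\<dots> = Y ** A ** X"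
    using XAX by simp
  finally have X_eq: "X = Y ** A ** X" .
  have "Y = Y ** transpose (A ** Y)"
    using YAY AY by (simp add: matrix_mul_assoc)
  also have "\<dots> = Y ** transpose Y ** transpose (A ** X ** A)"
    using AXA by (simp add: matrix_transpose_mul matrix_mul_assoc)
  also have "\<dots> = Y ** transpose (A ** Y) ** transpose (A ** X)"
    by (simp add: matrix_transpose_mul matrix_mul_assoc)
  also have "\<dots> = (Y ** A ** Y) ** A ** X"
    using AY AX by (simp add: matrix_mul_assoc)
  also have "\<dots> = Y ** A ** X"
    using YAY by simp
  finally show ?thesis using X_eq by simp
qed

lemma pinv_eqI:
  assumes "penrose_conditions A X"
  shows "pinv A = X"
  unfolding pinv_def
  using assms penrose_conditions_unique
  by (intro the_equality) (auto simp: penrose_conditions_def)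

lemma gram_matrix_symmetric_left_inverse:
  fixes B :: "real^'r^'m"
  assumes "inj ((*v) B)"
  obtains G where "G ** (transpose B ** B) = mat 1" and "transpose G = G"
proof -
  obtain L where L: "L ** B = mat 1"
    using assms matrix_left_invertible_injective by blast
  have "x = 0" if "(transpose B ** B) *v x = 0" for x
  proof -
    have "inner (B *v x) (B *v x) = inner x (transpose B *v (B *v x))"
      by (metis dot_lmul_matrix vector_transpose_matrix)
    also have "\<dots> = 0"
      using that by (simp add: matrix_vector_mul_assoc)
    finally have "B *v x = 0" by simp
    then show "x = 0"
      using L by (metis matrix_vector_mul_assoc matrix_vector_mul_lid matrix_vector_mult_0_right)
  qed
  then obtain G where G: "G ** (transpose B ** B) = mat 1"
    using matrix_left_invertible_ker by blast
  have "(transpose B ** B) ** transpose G = mat 1"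
    using arg_cong[OF G, of transpose] by (simp add: matrix_transpose_mul)
  then have "G = transpose G"
    using G by (metis matrix_mul_assoc matrix_mul_lid matrix_mul_rid)
  with G that show ?thesis by simp
qed

lemma penrose_conditions_pinv_injective:
  fixes B :: "real^'r^'m"
  assumes "inj ((*v) B)"
  shows "penrose_conditions B (pinv B)"
proof -
  obtain G where G: "G ** (transpose B ** B) = mat 1" and G_sym: "transpose G = G"
    using gram_matrix_symmetric_left_inverse assms by blast
  have left: "G ** transpose B ** B = mat 1"
    using G by (simp add: matrix_mul_assoc)
  have "penrose_conditions B (G ** transpose B)"
    unfolding penrose_conditions_def
    using left G_sym
    by (simp add: matrix_mul_assoc[symmetric] matrix_transpose_mul)
  then show ?thesis
    using pinv_eqI by metis
qed

lemma pinv_mult_self_injective: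
  fixes B :: "real^'r^'m"
  assumes "inj ((*v) B)"
  shows "pinv B ** B = mat 1"
proof -
  obtain L where L: "L ** B = mat 1"
    using assms matrix_left_invertible_injective by blast
  have "L ** (B ** pinv B ** B) = L ** B"
    using penrose_conditions_pinv_injective[OF assms] by (simp add: penrose_conditions_def)
  then show ?thesis
    using L by (simp add: matrix_mul_assoc)
qed

lemma matrix_diff_ldistrib: "(A::real^'b^'a) ** (B - C) = A ** B - A ** C"
  by (simp add: matrix_matrix_mult_def vec_eq_iff sum_subtractf algebra_simps)

lemma frob_inner_eq_trace: "frob_inner (X::real^'c^'r) Y = trace (transpose X ** Y)"
  unfolding frob_inner_def trace_def matrix_matrix_mult_def transpose_def
  by (simp, subst sum.swap, simp add: mult.commute)

lemma frob_inner_sign_mat: "frob_inner (sign_mat X) X = entry_norm1 X"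
proof -
  have "sgn x * x = \<bar>x\<bar>" for x :: real
    by (auto simp: sgn_real_def)
  then show ?thesis
    unfolding frob_inner_def entry_norm1_def sign_mat_def by simp
qed

lemma certificate_equation:
  fixes B :: "real^'r^'m" and X E :: "real^'m^'r"
  assumes XB: "X ** B = mat 1" and sym: "transpose (B ** X) = B ** X"
  shows "transpose B ** (transpose E ** X ** transpose X) ** transpose B
           + transpose B ** (transpose X ** E - transpose (transpose X ** E)) = E"
proof -
  have "X ** transpose X ** transpose B = X ** transpose (B ** X)"
    by (simp add: matrix_transpose_mul matrix_mul_assoc)
  also have "\<dots> = X ** (B ** X)"
    using sym by simp
  also have "\<dots> = X"
    using XB by (simp add: matrix_mul_assoc)
  finally have "transpose B ** (transpose E ** X ** transpose X) ** transpose B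
                  = transpose B ** transpose E ** X"
    by (simp add: matrix_mul_assoc[symmetric])
  moreover have "transpose B ** transpose X = mat 1"
    using XB by (metis matrix_transpose_mul transpose_mat)
  then have "transpose B ** (transpose X ** E - transpose (transpose X ** E))
               = E - transpose B ** transpose E ** X"
    by (simp add: matrix_diff_ldistrib matrix_transpose_mul matrix_mul_assoc)
  ultimately show ?thesis by simp
qed

lemma certificate_inner:
  fixes B :: "real^'r^'m" and X E :: "real^'m^'r"
  assumes XB: "X ** B = mat 1" and sym: "transpose (B ** X) = B ** X"
  shows "frob_inner B (transpose E ** X ** transpose X) = frob_inner E X"
proof -
  have "frob_inner B (transpose E ** X ** transpose X)
          = trace ((transpose B ** transpose E ** X) ** transpose X)"
    by (simp add: frob_inner_eq_trace matrix_mul_assoc)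
  also have "\<dots> = trace (transpose X ** (transpose B ** transpose E ** X))"
    by (rule trace_mul_sym)
  also have "\<dots> = trace (transpose (B ** X) ** transpose E ** X)"
    by (simp add: matrix_transpose_mul matrix_mul_assoc)
  also have "\<dots> = trace ((B ** X ** transpose E) ** X)"
    using sym by simp
  also have "\<dots> = trace (X ** (B ** X ** transpose E))"
    by (rule trace_mul_sym)
  also have "\<dots> = trace (X ** transpose E)"
    using XB by (simp add: matrix_mul_assoc)
  also have "\<dots> = trace (transpose E ** X)"
    by (rule trace_mul_sym)
  finally show ?thesis
    by (simp add: frob_inner_eq_trace)
qed

definition col_embed :: "real^'r^'m \<Rightarrow> ('r \<Rightarrow> 'n) \<Rightarrow> real^'n^'m" where
  "col_embed W T = (\<chi> i k. if k \<in> range T then W $ i $ inv T k else 0)"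

lemma sum_extend_by_zero_inj:
  fixes T :: "'r::finite \<Rightarrow> 'n::finite" and f :: "'r \<Rightarrow> real"
  assumes "inj T"
  shows "(\<Sum>k\<in>UNIV. (if k \<in> range T then f (inv T k) else 0) * g k) = (\<Sum>s\<in>UNIV. f s * g (T s))"
proof -
  have "(\<Sum>k\<in>UNIV. (if k \<in> range T then f (inv T k) else 0) * g k)
          = (\<Sum>k\<in>range T. f (inv T k) * g k)"
    by (simp add: if_distrib[of "\<lambda>x. x * _"] sum.If_cases)
  also have "\<dots> = (\<Sum>s\<in>UNIV. f s * g (T s))"
    using assms by (simp add: sum.reindex)
  finally show ?thesis .
qed

lemma col_embed_mult_transpose:
  assumes "inj T"
  shows "col_embed W T ** transpose A = W ** transpose (col_submatrix A T)"
  unfolding matrix_matrix_mult_def transpose_def col_embed_def col_submatrix_def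
  using sum_extend_by_zero_inj[OF assms] by simp

lemma frob_inner_col_embed:
  assumes "inj T"
  shows "frob_inner A (col_embed W T) = frob_inner (col_submatrix A T) W"
  unfolding frob_inner_def col_embed_def col_submatrix_def
  using sum_extend_by_zero_inj[OF assms] by (simp add: mult.commute)

theorem lemma3p6:
  fixes A :: "real^'n^'m" and T :: "'r::finite \<Rightarrow> 'n"
  assumes "inj T"
    and "rank (col_submatrix A T) = CARD('r)"
  shows "\<exists>(W :: real^'n^'m) (U :: real^'m^'m).
           transpose U = - U \<and>
           transpose (col_submatrix A T) ** W ** transpose A + transpose (col_submatrix A T) ** U
             = sign_mat (pinv (col_submatrix A T)) \<and>
           frob_inner A W = entry_norm1 (pinv (col_submatrix A T))"
proof -
  define Ah where "Ah = col_submatrix A T"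
  define X where "X = pinv Ah"
  define E where "E = sign_mat X"
  define Wh where "Wh = transpose E ** X ** transpose X"
  define U where "U = transpose X ** E - transpose (transpose X ** E)"
  have "inj ((*v) Ah)"
    using assms(2) full_rank_injective unfolding Ah_def by blast
  then have XA: "X ** Ah = mat 1" and sym: "transpose (Ah ** X) = Ah ** X"
    using pinv_mult_self_injective penrose_conditions_pinv_injective
    unfolding X_def penrose_conditions_def by blast+
  have "transpose U = - U"
    by (simp add: U_def transpose_def vec_eq_iff)
  moreover have "transpose Ah ** col_embed Wh T ** transpose A + transpose Ah ** U = E"
    using certificate_equation[OF XA sym] assms(1)
    by (simp add: matrix_mul_assoc[symmetric] col_embed_mult_transpose Ah_def Wh_def U_def)
  moreover have "frob_inner A (col_embed Wh T) = entry_norm1 X"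
    using certificate_inner[OF XA sym] assms(1)
    by (simp add: frob_inner_col_embed frob_inner_sign_mat Ah_def Wh_def E_def)
  ultimately show ?thesis
    unfolding Ah_def X_def E_def by blast
qed

end
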